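(* Let $n(k_1,k_2,k_3)=(e^{ik_1}-1)(e^{ik_2}-1)(e^{ik_3}-1)+\overline{(e^{ik_1}-1)(e^{ik_2}-1)(e^{ik_3}-1)}$. There exists $C>0$ such that for all $k_1,k_2,k_3\in(-\pi,\pi]$, with $k=k_1+k_2+k_3$, we have $|n(k_1,k_2,k_3)|\le C|k|$. *)

theory Defs
  imports Complex_Main
begin

definition nfun :: "real \<Rightarrow> real \<Rightarrow> real \<Rightarrow> complex" where
  "nfun k1 k2 k3 =
     (let p = (exp (\<i> * of_real k1) - 1) * (exp (\<i> * of_real k2) - 1) * (exp (\<i> * of_real k3) - 1)
      in p + cnj p)"

end

theory Submission
  imports Defs
begin

text \<open>Factoring out half angles, \<open>exp(ix) - 1 = 2i sin(x/2) exp(ix/2)\<close>, the product in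
  \<open>nfun\<close> becomes \<open>-8i s1 s2 s3 exp(ik/2)\<close> with \<open>sj = sin(kj/2)\<close>, and adding its conjugate
  leaves the real number \<open>16 s1 s2 s3 sin(k/2)\<close>.\<close>

lemma exp_i_minus_one_half_angle:
  "exp (\<i> * of_real x) - 1 = 2 * \<i> * of_real (sin (x/2)) * exp (\<i> * of_real (x/2))"
proof -
  let ?h = "exp (\<i> * of_real (x/2))"
  have sine: "2 * \<i> * of_real (sin (x/2)) = ?h - exp (- (\<i> * of_real (x/2)))"
    by (simp add: complex_eq_iff exp_eq_polar cos_of_real sin_of_real)
  have "2 * \<i> * of_real (sin (x/2)) * ?h = ?h * ?h - exp (- (\<i> * of_real (x/2))) * ?h"
    unfolding sine by (rule left_diff_distrib)
  also have "\<dots> = exp (\<i> * of_real x) - 1"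
    by (simp flip: exp_add add: distrib_left[symmetric])
  finally show ?thesis ..
qed

lemma nfun_eq_sin_product:
  "nfun a b c = of_real (16 * sin (a/2) * sin (b/2) * sin (c/2) * sin ((a + b + c)/2))"
proof -
  let ?e = "exp (\<i> * of_real ((a + b + c)/2))"
  have half_angles: "exp (\<i> * of_real (a/2)) * exp (\<i> * of_real (b/2)) * exp (\<i> * of_real (c/2)) = ?e"
    by (simp flip: exp_add add: algebra_simps add_divide_distrib)
  have product: "(exp (\<i> * of_real a) - 1) * (exp (\<i> * of_real b) - 1) * (exp (\<i> * of_real c) - 1)
      = ?e * (- 8 * \<i> * of_real (sin (a/2) * sin (b/2) * sin (c/2)))"
    unfolding exp_i_minus_one_half_angle half_angles[symmetric] by (simp add: algebra_simps)
  have "?e = of_real (cos ((a + b + c)/2)) + \<i> * of_real (sin ((a + b + c)/2))"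
    by (simp add: exp_eq_polar cis.ctr Complex_eq)
  then show ?thesis
    unfolding nfun_def Let_def product by (simp add: complex_eq_iff)
qed

lemma norm_nfun_le: "cmod (nfun a b c) \<le> 8 * \<bar>a + b + c\<bar>"
proof -
  have "cmod (nfun a b c) = 16 * \<bar>sin (a/2)\<bar> * \<bar>sin (b/2)\<bar> * \<bar>sin (c/2)\<bar> * \<bar>sin ((a + b + c)/2)\<bar>"
    unfolding nfun_eq_sin_product norm_of_real by (simp add: abs_mult)
  also have "\<dots> \<le> 16 * 1 * 1 * 1 * \<bar>(a + b + c)/2\<bar>"
    by (intro mult_mono abs_sin_le_one abs_sin_x_le_abs_x) auto
  finally show ?thesis by simp
qed

theorem mainTheorem3:
  shows "\<exists>C>0. \<forall>k1 k2 k3 :: real.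
           k1 \<in> {-pi<..pi} \<longrightarrow> k2 \<in> {-pi<..pi} \<longrightarrow> k3 \<in> {-pi<..pi} \<longrightarrow>
           cmod (nfun k1 k2 k3) \<le> C * \<bar>k1 + k2 + k3\<bar>"
  using norm_nfun_le by (intro exI[of _ 8]) simp

end
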